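(* Let $E\to M$ be a vector bundle of rank at least $n$ equipped with a pseudo-metric $\langle\cdot,\cdot\rangle$ (a nondegenerate symmetric bilinear form). Let $\widehat{u}^1,\dots,\widehat{u}^n\in\Gamma(E)$ be linearly independent over $C^\infty(M)$, and let $\widehat{Z}_1,\dots,\widehat{Z}_n$ be covariant differential operators on $E$ with symbols $\widehat{z}_1,\dots,\widehat{z}_n\in\Gamma(TM)$ satisfying $\langle\widehat{Z}_i(e_1),e_2\rangle+\langle e_1,\widehat{Z}_i(e_2)\rangle=\widehat{z}_i\langle e_1,e_2\rangle$ for all $e_1,e_2\in\Gamma(E)$ and all $i$. Define $$a_E(e)=\sum_i\langle e,\widehat{u}^i\rangle\widehat{z}_i,\quad \mathcal{D}(f)=\sum_i\widehat{z}_i(f)\,\widehat{u}^i,\quad \nabla_{e_1}e_2=\sum_i\langle e_1,\widehat{u}^i\rangle\widehat{Z}_i(e_2),\quad \Delta_{e_2}e_1=\sum_i\langle\widehat{Z}_i(e_1),e_2\rangle\widehat{u}^i,$$ $$e_1\circ e_2=\nabla_{e_1}e_2-\nabla_{e_2}e_1+\Delta_{e_2}e_1=\sum_i\Big(\langle e_1,\widehat{u}^i\rangle\widehat{Z}_i(e_2)-\langle e_2,\widehat{u}^i\rangle\widehat{Z}_i(e_1)+\langle \widehat{Z}_i(e_1),e_2\rangle\widehat{u}^i\Big).$$ Suppose there are functions $C_{ik}^j\in C^\infty(M)$ such that for all $i,j\in\{1,\dots,n\}$: $$\widehat{Z}_i(\widehat{u}^j)=\sum_k C_{ik}^j\widehat{u}^k,\qquad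 \langle\widehat{u}^i,\widehat{u}^j\rangle=0,\qquad [\widehat{Z}_i,\widehat{Z}_j]=\sum_k\big(C_{ji}^k-C_{ij}^k\big)\widehat{Z}_k.$$ Then for all $e_1,e_2,e_3\in\Gamma(E)$, $$C^\nabla(e_1,e_2)e_3=\nabla_{\Delta_{e_3}e_2}e_1=Q(e_1,e_2,e_3)=\big(\mathcal{D}\langle e_1,e_3\rangle\big)\circ e_2=0,$$ and $(E,\langle\cdot,\cdot\rangle,\circ,a_E)$ is a Courant algebroid.
   Context: A covariant differential operator on $E$ is an $\mathbb{R}$-linear map $\widehat{Z}:\Gamma(E)\to\Gamma(E)$ with a vector field $\widehat{z}$ (its symbol) such that $\widehat{Z}(fe)=f\widehat{Z}(e)+\widehat{z}(f)e$; the commutator $[\widehat{Z}_i,\widehat{Z}_j]=\widehat{Z}_i\widehat{Z}_j-\widehat{Z}_j\widehat{Z}_i$. Note $\langle\mathcal{D}(f),e\rangle=a_E(e)(f)$. The Courant curvature is $C^\nabla(e_1,e_2)=\nabla_{e_1}\nabla_{e_2}-\nabla_{e_2}\nabla_{e_1}-\nabla_{e_1\circ e_2}$ (an operator on $\Gamma(E)$), and $Q(e_1,e_2,e_3)\in\Gamma(E)$ is defined by $\langle Q(e_1,e_2,e_3),t\rangle=\langle C^\nabla(e_1,t)e_2,e_3\rangle+\langle C^\nabla(e_2,t)e_3,e_1\rangle+\langle C^\nabla(e_3,t)e_1,e_2\rangle$ for all $t\in\Gamma(E)$. A Courant algebroid $(E,\langle\cdot,\cdot\rangle,\circ,a_E)$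 consists of a pseudo-metric bundle, a bundle map $a_E:E\to TM$ and an $\mathbb{R}$-bilinear bracket $\circ$ on $\Gamma(E)$ such that (i) $a_E(e)\langle h_1,h_2\rangle=\langle e\circ h_1,h_2\rangle+\langle h_1,e\circ h_2\rangle$, (ii) $e\circ e=\tfrac12\mathcal{D}\langle e,e\rangle$ where $\langle\mathcal{D}f,e\rangle=a_E(e)(f)$, and (iii) $e_1\circ(e_2\circ e_3)=(e_1\circ e_2)\circ e_3+e_2\circ(e_1\circ e_3)$, for all sections. *)

theory Defs
  imports Complex_Main
begin

text \<open>C-infinity(M) is an abstract commutative real algebra of type 'f;
  Gamma(E) is an 'f-module of type 'e with scalar action smul; vector fields on M are
  R-linear derivations of 'f.  Real scalars act on sections via smul (of_real c).\<close>

definition is_vector_field :: "('f::{comm_ring_1,real_algebra_1} \<Rightarrow> 'f) \<Rightarrow> bool" where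
  "is_vector_field z \<longleftrightarrow>
     (\<forall>f g. z (f + g) = z f + z g) \<and>
     (\<forall>(c::real) f. z (c *\<^sub>R f) = c *\<^sub>R z f) \<and>
     (\<forall>f g. z (f * g) = f * z g + z f * g)"

definition cov_diff_op ::
  "('f::{comm_ring_1,real_algebra_1} \<Rightarrow> 'e::ab_group_add \<Rightarrow> 'e) \<Rightarrow> ('e \<Rightarrow> 'e) \<Rightarrow> ('f \<Rightarrow> 'f) \<Rightarrow> bool" where
  "cov_diff_op smul Z z \<longleftrightarrow>
     is_vector_field z \<and>
     (\<forall>e1 e2. Z (e1 + e2) = Z e1 + Z e2) \<and>
     (\<forall>(c::real) e. Z (smul (of_real c) e) = smul (of_real c) (Z e)) \<and>
     (\<forall>f e. Z (smul f e) = smul f (Z e) + smul (z f) e)"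

definition pseudo_metric ::
  "('f::comm_ring_1 \<Rightarrow> 'e::ab_group_add \<Rightarrow> 'e) \<Rightarrow> ('e \<Rightarrow> 'e \<Rightarrow> 'f) \<Rightarrow> bool" where
  "pseudo_metric smul ip \<longleftrightarrow>
     (\<forall>e1 e2. ip e1 e2 = ip e2 e1) \<and>
     (\<forall>e1 e2 e3. ip (e1 + e2) e3 = ip e1 e3 + ip e2 e3) \<and>
     (\<forall>f e1 e2. ip (smul f e1) e2 = f * ip e1 e2) \<and>
     (\<forall>e. (\<forall>t. ip e t = 0) \<longrightarrow> e = 0)"

definition lin_indep_family ::
  "('f::comm_ring_1 \<Rightarrow> 'e::ab_group_add \<Rightarrow> 'e) \<Rightarrow> nat \<Rightarrow> (nat \<Rightarrow> 'e) \<Rightarrow> bool" where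
  "lin_indep_family smul n u \<longleftrightarrow>
     (\<forall>c. (\<Sum>i\<in>{1..n}. smul (c i) (u i)) = 0 \<longrightarrow> (\<forall>i\<in>{1..n}. c i = 0))"

definition anchorE :: "('e \<Rightarrow> 'e \<Rightarrow> 'f::comm_ring_1) \<Rightarrow> nat \<Rightarrow> (nat \<Rightarrow> 'e) \<Rightarrow> (nat \<Rightarrow> 'f \<Rightarrow> 'f)
    \<Rightarrow> 'e \<Rightarrow> 'f \<Rightarrow> 'f" where
  "anchorE ip n u z e = (\<lambda>f. \<Sum>i\<in>{1..n}. ip e (u i) * z i f)"

definition DD :: "('f::comm_ring_1 \<Rightarrow> 'e::ab_group_add \<Rightarrow> 'e) \<Rightarrow> nat \<Rightarrow> (nat \<Rightarrow> 'e) \<Rightarrow> (nat \<Rightarrow> 'f \<Rightarrow> 'f)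
    \<Rightarrow> 'f \<Rightarrow> 'e" where
  "DD smul n u z f = (\<Sum>i\<in>{1..n}. smul (z i f) (u i))"

definition nablaE :: "('f::comm_ring_1 \<Rightarrow> 'e::ab_group_add \<Rightarrow> 'e) \<Rightarrow> ('e \<Rightarrow> 'e \<Rightarrow> 'f) \<Rightarrow> nat
    \<Rightarrow> (nat \<Rightarrow> 'e) \<Rightarrow> (nat \<Rightarrow> 'e \<Rightarrow> 'e) \<Rightarrow> 'e \<Rightarrow> 'e \<Rightarrow> 'e" where
  "nablaE smul ip n u Z e1 e2 = (\<Sum>i\<in>{1..n}. smul (ip e1 (u i)) (Z i e2))"

text \<open>DeltaE ... e2 e1 is Delta_{e2} e1.\<close>
definition DeltaE :: "('f::comm_ring_1 \<Rightarrow> 'e::ab_group_add \<Rightarrow> 'e) \<Rightarrow> ('e \<Rightarrow> 'e \<Rightarrow> 'f) \<Rightarrow> nat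
    \<Rightarrow> (nat \<Rightarrow> 'e) \<Rightarrow> (nat \<Rightarrow> 'e \<Rightarrow> 'e) \<Rightarrow> 'e \<Rightarrow> 'e \<Rightarrow> 'e" where
  "DeltaE smul ip n u Z e2 e1 = (\<Sum>i\<in>{1..n}. smul (ip (Z i e1) e2) (u i))"

definition circE :: "('f::comm_ring_1 \<Rightarrow> 'e::ab_group_add \<Rightarrow> 'e) \<Rightarrow> ('e \<Rightarrow> 'e \<Rightarrow> 'f) \<Rightarrow> nat
    \<Rightarrow> (nat \<Rightarrow> 'e) \<Rightarrow> (nat \<Rightarrow> 'e \<Rightarrow> 'e) \<Rightarrow> 'e \<Rightarrow> 'e \<Rightarrow> 'e" where
  "circE smul ip n u Z e1 e2 =
     nablaE smul ip n u Z e1 e2 - nablaE smul ip n u Z e2 e1 + DeltaE smul ip n u Z e2 e1"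

definition courant_curv :: "('e \<Rightarrow> 'e \<Rightarrow> 'e::ab_group_add) \<Rightarrow> ('e \<Rightarrow> 'e \<Rightarrow> 'e) \<Rightarrow> 'e \<Rightarrow> 'e \<Rightarrow> 'e \<Rightarrow> 'e" where
  "courant_curv nab cir e1 e2 e3 = nab e1 (nab e2 e3) - nab e2 (nab e1 e3) - nab (cir e1 e2) e3"

definition Qop :: "('e \<Rightarrow> 'e \<Rightarrow> 'f::comm_ring_1) \<Rightarrow> ('e \<Rightarrow> 'e \<Rightarrow> 'e::ab_group_add) \<Rightarrow> ('e \<Rightarrow> 'e \<Rightarrow> 'e)
    \<Rightarrow> 'e \<Rightarrow> 'e \<Rightarrow> 'e \<Rightarrow> 'e" where
  "Qop ip nab cir e1 e2 e3 = (THE q. \<forall>t.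
      ip q t = ip (courant_curv nab cir e1 t e2) e3 + ip (courant_curv nab cir e2 t e3) e1
             + ip (courant_curv nab cir e3 t e1) e2)"

definition courant_D :: "('e \<Rightarrow> 'e \<Rightarrow> 'f) \<Rightarrow> ('e \<Rightarrow> 'f \<Rightarrow> 'f) \<Rightarrow> 'f \<Rightarrow> 'e" where
  "courant_D ip a f = (THE d. \<forall>e. ip d e = a e f)"

definition courant_algebroid ::
  "('f::{comm_ring_1,real_algebra_1} \<Rightarrow> 'e::ab_group_add \<Rightarrow> 'e) \<Rightarrow> ('e \<Rightarrow> 'e \<Rightarrow> 'f)
     \<Rightarrow> ('e \<Rightarrow> 'e \<Rightarrow> 'e) \<Rightarrow> ('e \<Rightarrow> 'f \<Rightarrow> 'f) \<Rightarrow> bool" where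
  "courant_algebroid smul ip cir a \<longleftrightarrow>
     pseudo_metric smul ip \<and>
     \<comment> \<open>a is a bundle map E \<rightarrow> TM\<close>
     (\<forall>e. is_vector_field (a e)) \<and>
     (\<forall>e1 e2 f. a (e1 + e2) f = a e1 f + a e2 f) \<and>
     (\<forall>g e f. a (smul g e) f = g * a e f) \<and>
     \<comment> \<open>the bracket is R-bilinear\<close>
     (\<forall>e1 e2 e3. cir (e1 + e2) e3 = cir e1 e3 + cir e2 e3) \<and>
     (\<forall>e1 e2 e3. cir e1 (e2 + e3) = cir e1 e2 + cir e1 e3) \<and>
     (\<forall>(c::real) e1 e2. cir (smul (of_real c) e1) e2 = smul (of_real c) (cir e1 e2)) \<and>
     (\<forall>(c::real) e1 e2. cir e1 (smul (of_real c) e2) = smul (of_real c) (cir e1 e2)) \<and>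
     \<comment> \<open>axioms (i)--(iii)\<close>
     (\<forall>e h1 h2. a e (ip h1 h2) = ip (cir e h1) h2 + ip h1 (cir e h2)) \<and>
     (\<forall>e. cir e e = smul (of_real (1/2)) (courant_D ip a (ip e e))) \<and>
     (\<forall>e1 e2 e3. cir e1 (cir e2 e3) = cir (cir e1 e2) e3 + cir e2 (cir e1 e3))"

end

theory Submission
  imports Defs
begin

(*
  The operator nab_e = sum_i <e,u^i> Z_i is a metric connection with anchor a_E, and it is flat:
  in nab_x nab_y w the derivatives z_i <y,u^j> reassemble, by metric compatibility and
  Z_i u^j = sum_k C_ik^j u^k, into nab_(nab_x y) w, and what is left,
  sum_ij <x,u^i> <y,u^j> (Z_i Z_j + sum_k C_ij^k Z_k) w, is symmetric in x and y by the
  commutator relations. Since the u^i are isotropic, Delta_h e and D f pair to zero with every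
  u^i, so nab vanishes along them. For any flat metric connection with this property, the bracket
  nab_a b - nab_b a + Delta_b a has vanishing Courant curvature, and after pairing with a test
  section its Jacobi identity reduces to flatness. Linear independence of the u^i makes the
  module faithful, which turns the Leibniz defect of the curvature into the statement that the
  anchor preserves brackets; this gives (D f) o e = 0.
*)

lemma vector_field_add: "is_vector_field z \<Longrightarrow> z (f + g) = z f + z g"
  and vector_field_mult: "is_vector_field z \<Longrightarrow> z (f * g) = f * z g + z f * g"
  and vector_field_scaleR: "is_vector_field z \<Longrightarrow> z (c *\<^sub>R f) = c *\<^sub>R z f"
  unfolding is_vector_field_def by blast+

lemma vector_field_of_real:
  assumes "is_vector_field z"
  shows "z (of_real c) = 0"
proof -
  have "z 1 = 0"
    using vector_field_mult[OF assms, of 1 1] by simp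
  then show ?thesis
    using vector_field_scaleR[OF assms, of c 1] by (simp add: of_real_def)
qed

locale pseudo_metric_module = module smul
  for smul :: "'f::{comm_ring_1,real_algebra_1} \<Rightarrow> 'e::ab_group_add \<Rightarrow> 'e" +
  fixes ip :: "'e \<Rightarrow> 'e \<Rightarrow> 'f"
  assumes pseudo_metric: "pseudo_metric smul ip"
begin

lemma ip_sym: "ip a b = ip b a"
  and ip_add_left: "ip (a + b) c = ip a c + ip b c"
  and ip_smul_left: "ip (smul f a) b = f * ip a b"
  and ip_nondegenerate: "(\<And>t. ip e t = 0) \<Longrightarrow> e = 0"
  using pseudo_metric unfolding pseudo_metric_def by blast+

lemma ip_add_right: "ip c (a + b) = ip c a + ip c b"
  by (simp add: ip_sym[of c] ip_add_left)

lemma ip_smul_right: "ip b (smul f a) = f * ip b a"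
  by (simp add: ip_sym[of b] ip_smul_left)

lemma ip_zero_left [simp]: "ip 0 a = 0"
  using ip_add_left[of 0 0 a] by simp

lemma ip_diff_left: "ip (a - b) c = ip a c - ip b c"
  using ip_add_left[of "a - b" b c] by (simp add: algebra_simps)

lemma ip_sum_left: "ip (sum g A) t = (\<Sum>x\<in>A. ip (g x) t)"
  by (induction A rule: infinite_finite_induct) (simp_all add: ip_add_left)

lemma ip_sum_right: "ip t (sum g A) = (\<Sum>x\<in>A. ip t (g x))"
  by (simp add: ip_sym[of t] ip_sum_left)

lemma ip_ext: "(\<And>t. ip a t = ip b t) \<Longrightarrow> a = b"
  using ip_nondegenerate[of "a - b"] by (simp add: ip_diff_left)

end

locale metric_connection = pseudo_metric_module smul ip
  for smul :: "'f::{comm_ring_1,real_algebra_1} \<Rightarrow> 'e::ab_group_add \<Rightarrow> 'e"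
    and ip :: "'e \<Rightarrow> 'e \<Rightarrow> 'f" +
  fixes nab :: "'e \<Rightarrow> 'e \<Rightarrow> 'e"
    and rho :: "'e \<Rightarrow> 'f \<Rightarrow> 'f"
  assumes nab_add_left: "nab (a + b) h = nab a h + nab b h"
    and nab_smul_left: "nab (smul f a) h = smul f (nab a h)"
    and nab_add_right: "nab e (a + b) = nab e a + nab e b"
    and nab_smul_right: "nab e (smul f h) = smul f (nab e h) + smul (rho e f) h"
    and anchor_vector_field: "is_vector_field (rho e)"
    and anchor_add: "rho (a + b) f = rho a f + rho b f"
    and anchor_smul: "rho (smul g a) f = g * rho a f"
    and nab_metric: "rho e (ip a b) = ip (nab e a) b + ip a (nab e b)"
begin

lemma nab_diff_left: "nab (a - b) h = nab a h - nab b h"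
  using nab_add_left[of "a - b" b h] by (simp add: algebra_simps)

lemma nab_diff_right: "nab e (a - b) = nab e a - nab e b"
  using nab_add_right[of e "a - b" b] by (simp add: algebra_simps)

lemma anchor_diff: "rho (a - b) f = rho a f - rho b f"
  using anchor_add[of "a - b" b f] by (simp add: algebra_simps)

lemma anchor_of_real [simp]: "rho e (of_real c) = 0"
  by (rule vector_field_of_real[OF anchor_vector_field])

lemma ip_nab_left: "ip (nab e a) b = rho e (ip a b) - ip a (nab e b)"
  by (simp add: nab_metric)

definition curv :: "'e \<Rightarrow> 'e \<Rightarrow> 'e \<Rightarrow> 'e" where
  "curv x y w = nab x (nab y w) - nab y (nab x w) - nab (nab x y - nab y x) w"

lemma curv_smul:
  "curv x y (smul f w) = smul f (curv x y w)
     + smul (rho x (rho y f) - rho y (rho x f) - rho (nab x y - nab y x) f) w"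
  by (simp add: curv_def nab_smul_right nab_add_right anchor_diff nab_diff_left algebra_simps)

end

locale flat_metric_connection = metric_connection smul ip nab rho
  for smul :: "'f::{comm_ring_1,real_algebra_1} \<Rightarrow> 'e::ab_group_add \<Rightarrow> 'e"
    and ip :: "'e \<Rightarrow> 'e \<Rightarrow> 'f"
    and nab :: "'e \<Rightarrow> 'e \<Rightarrow> 'e"
    and rho :: "'e \<Rightarrow> 'f \<Rightarrow> 'f" +
  fixes Del :: "'e \<Rightarrow> 'e \<Rightarrow> 'e"
    and D :: "'f \<Rightarrow> 'e"
  assumes flat: "curv x y w = 0"
    and ip_Del: "ip (Del h e) t = ip (nab t e) h"
    and ip_D: "ip (D f) e = rho e f"
    and nab_Del: "nab (Del h e) x = 0"
    and nab_D: "nab (D f) x = 0"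
    and faithful: "(\<And>w. smul g w = 0) \<Longrightarrow> g = 0 \<or> (\<forall>e f. rho e f = 0)"
begin

definition circ :: "'e \<Rightarrow> 'e \<Rightarrow> 'e" where
  "circ a b = nab a b - nab b a + Del b a"

lemma ip_circ: "ip (circ a b) t = ip (nab a b) t - ip (nab b a) t + ip (nab t a) b"
  by (simp add: circ_def ip_add_left ip_diff_left ip_Del)

lemma anchor_bracket: "rho x (rho y f) - rho y (rho x f) = rho (nab x y - nab y x) f"
proof -
  have "smul (rho x (rho y f) - rho y (rho x f) - rho (nab x y - nab y x) f) w = 0" for w
    using curv_smul[of x y f w] by (simp add: flat)
  then show ?thesis
    using faithful by fastforce
qed

lemma ip_nab_nab:
  "ip (nab t (nab x y)) w = rho x (ip (nab t y) w) - ip (nab t y) (nab x w)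
     - ip (nab (nab x t) y) w + ip (nab (nab t x) y) w"
proof -
  have "ip (curv x t y) w = 0"
    by (simp add: flat)
  then show ?thesis
    by (simp add: curv_def ip_add_left ip_diff_left nab_diff_left ip_nab_left[of x] algebra_simps)
qed

lemma ip_nab_Del: "ip (nab x (Del h e)) t = rho x (ip (nab t e) h) - ip (nab (nab x t) e) h"
  by (simp add: ip_nab_left ip_Del)

lemma Del_circ_cocycle:
  "nab e1 (Del e3 e2) - nab e2 (Del e3 e1) + nab e3 (Del e2 e1) + Del (circ e2 e3) e1
     - Del (circ e1 e3) e2 - Del e3 (circ e1 e2) = 0"
proof (rule ip_nondegenerate)
  \<comment> \<open>Paired with t, every term becomes first order, and they cancel by flatness in the
    form ip_nab_nab.\<close>
  fix t
  have "ip (Del e3 (circ e1 e2)) t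
      = ip (nab t (nab e1 e2)) e3 - ip (nab t (nab e2 e1)) e3 + ip (nab t (Del e2 e1)) e3"
    by (simp add: ip_Del circ_def nab_add_right nab_diff_right ip_add_left ip_diff_left)
  moreover have "rho t (ip (nab e3 e1) e2) = ip (nab t (nab e3 e1)) e2 + ip (nab e3 e1) (nab t e2)"
    by (rule nab_metric)
  ultimately show "ip (nab e1 (Del e3 e2) - nab e2 (Del e3 e1) + nab e3 (Del e2 e1)
      + Del (circ e2 e3) e1 - Del (circ e1 e3) e2 - Del e3 (circ e1 e2)) t = 0"
    by (simp add: ip_add_left ip_diff_left ip_nab_Del ip_Del ip_circ ip_nab_nab
        ip_sym[of "nab t _"] algebra_simps)
qed

lemma nab_circ_left: "nab (circ a b) x = nab (nab a b) x - nab (nab b a) x"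
  by (simp add: circ_def nab_add_left nab_diff_left nab_Del)

lemma nab_circ_right: "nab x (circ a b) = nab x (nab a b) - nab x (nab b a) + nab x (Del b a)"
  by (simp add: circ_def nab_add_right nab_diff_right)

lemma circ_jacobi: "circ e1 (circ e2 e3) = circ (circ e1 e2) e3 + circ e2 (circ e1 e3)"
proof -
  have "circ e1 (circ e2 e3) - circ (circ e1 e2) e3 - circ e2 (circ e1 e3)
    = (nab e1 (Del e3 e2) - nab e2 (Del e3 e1) + nab e3 (Del e2 e1) + Del (circ e2 e3) e1
        - Del (circ e1 e3) e2 - Del e3 (circ e1 e2))
      + (curv e1 e2 e3 - curv e1 e3 e2 + curv e2 e3 e1)"
    unfolding circ_def[of e1 "circ e2 e3"] circ_def[of "circ e1 e2" e3] circ_def[of e2 "circ e1 e3"]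
    by (simp add: curv_def nab_circ_left nab_circ_right nab_diff_left algebra_simps)
  also have "\<dots> = 0"
    by (simp only: Del_circ_cocycle flat) simp
  finally show ?thesis
    by (simp add: algebra_simps)
qed

lemma circ_D_left: "circ (D f) e = 0"
proof (rule ip_nondegenerate)
  fix t
  have "ip (circ (D f) e) t = rho (nab e t) f - rho (nab t e) f - (rho e (rho t f) - rho t (rho e f))"
    by (simp add: ip_circ nab_D ip_nab_left ip_D ip_sym[of "D f"] anchor_diff)
  then show "ip (circ (D f) e) t = 0"
    by (simp add: anchor_bracket anchor_diff)
qed

lemma courant_D_eq: "courant_D ip rho f = D f"
  unfolding courant_D_def
  by (rule the_equality) (auto intro: ip_ext simp: ip_D)

lemma circ_self: "circ e e = smul (of_real (1/2)) (courant_D ip rho (ip e e))"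
proof (rule ip_ext)
  fix t
  have half: "of_real (1/2) * (2 * x) = x" for x :: 'f
  proof -
    have "of_real (1/2) * (2 * x) = of_real (1/2 * 2) * x"
      by (simp only: of_real_mult of_real_numeral mult.assoc)
    then show ?thesis
      by simp
  qed
  have "rho t (ip e e) = ip (nab t e) e + ip (nab t e) e"
    using nab_metric[of t e e] ip_sym[of e "nab t e"] by simp
  then show "ip (circ e e) t = ip (smul (of_real (1/2)) (courant_D ip rho (ip e e))) t"
    by (simp add: ip_circ courant_D_eq ip_smul_left ip_D half)
qed

lemma anchor_circ: "rho e (ip h1 h2) = ip (circ e h1) h2 + ip h1 (circ e h2)"
  by (simp add: ip_sym[of h1 "circ e h2"] ip_sym[of "nab e h2" h1] ip_circ nab_metric)

lemma circ_add_left: "circ (a + b) c = circ a c + circ b c"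
  and circ_add_right: "circ c (a + b) = circ c a + circ c b"
  by (auto intro!: ip_ext simp: ip_add_left ip_circ nab_add_left nab_add_right ip_add_right)

lemma circ_real_left: "circ (smul (of_real r) a) b = smul (of_real r) (circ a b)"
  and circ_real_right: "circ a (smul (of_real r) b) = smul (of_real r) (circ a b)"
  by (auto intro!: ip_ext simp: ip_circ nab_smul_left nab_smul_right ip_add_left ip_smul_left
      ip_smul_right algebra_simps)

lemma courant_curv_eq_zero: "courant_curv nab circ x y w = 0"
  using flat[of x y w] by (simp add: courant_curv_def curv_def circ_def nab_add_left nab_Del)

lemma Qop_eq_zero: "Qop ip nab circ e1 e2 e3 = 0"
  unfolding Qop_def courant_curv_eq_zero
  by (rule the_equality) (auto intro: ip_nondegenerate)

lemma courant_algebroid: "courant_algebroid smul ip circ rho"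
  unfolding courant_algebroid_def
  using pseudo_metric anchor_vector_field anchor_add anchor_smul circ_add_left circ_add_right
    circ_real_left circ_real_right anchor_circ circ_self circ_jacobi
  by blast

end

lemma cov_diff_op_add: "cov_diff_op smul Z z \<Longrightarrow> Z (a + b) = Z a + Z b"
  and cov_diff_op_leibniz: "cov_diff_op smul Z z \<Longrightarrow> Z (smul f e) = smul f (Z e) + smul (z f) e"
  and cov_diff_op_vector_field: "cov_diff_op smul Z z \<Longrightarrow> is_vector_field z"
  unfolding cov_diff_op_def by blast+

lemma cov_diff_op_sum: "cov_diff_op smul Z z \<Longrightarrow> Z (sum g A) = (\<Sum>x\<in>A. Z (g x))"
  by (rule additive.sum) (simp add: additive_def cov_diff_op_add)

locale isotropic_frame = pseudo_metric_module smul ip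
  for smul :: "'f::{comm_ring_1,real_algebra_1} \<Rightarrow> 'e::ab_group_add \<Rightarrow> 'e"
    and ip :: "'e \<Rightarrow> 'e \<Rightarrow> 'f" +
  fixes n :: nat
    and u :: "nat \<Rightarrow> 'e"
    and Z :: "nat \<Rightarrow> 'e \<Rightarrow> 'e"
    and z :: "nat \<Rightarrow> 'f \<Rightarrow> 'f"
    and C :: "nat \<Rightarrow> nat \<Rightarrow> nat \<Rightarrow> 'f"
  assumes indep: "lin_indep_family smul n u"
    and cdo: "\<forall>i\<in>{1..n}. cov_diff_op smul (Z i) (z i)"
    and compat: "\<forall>i\<in>{1..n}. \<forall>e1 e2. ip (Z i e1) e2 + ip e1 (Z i e2) = z i (ip e1 e2)"
    and Zu: "\<forall>i\<in>{1..n}. \<forall>j\<in>{1..n}. Z i (u j) = (\<Sum>k\<in>{1..n}. smul (C i k j) (u k))"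
    and isotropic: "\<forall>i\<in>{1..n}. \<forall>j\<in>{1..n}. ip (u i) (u j) = 0"
    and commutator: "\<forall>i\<in>{1..n}. \<forall>j\<in>{1..n}. \<forall>e.
        Z i (Z j e) - Z j (Z i e) = (\<Sum>k\<in>{1..n}. smul (C j i k - C i j k) (Z k e))"
begin

abbreviation nab where "nab \<equiv> nablaE smul ip n u Z"
abbreviation Del where "Del \<equiv> DeltaE smul ip n u Z"
abbreviation rho where "rho \<equiv> anchorE ip n u z"
abbreviation D where "D \<equiv> DD smul n u z"

lemma Z_add: "i \<in> {1..n} \<Longrightarrow> Z i (a + b) = Z i a + Z i b"
  and Z_leibniz: "i \<in> {1..n} \<Longrightarrow> Z i (smul f e) = smul f (Z i e) + smul (z i f) e"
  and Z_sum: "i \<in> {1..n} \<Longrightarrow> Z i (sum g A) = (\<Sum>x\<in>A. Z i (g x))"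
  and z_vector_field: "i \<in> {1..n} \<Longrightarrow> is_vector_field (z i)"
  using cdo cov_diff_op_add cov_diff_op_leibniz cov_diff_op_sum cov_diff_op_vector_field by blast+

lemma z_ip: "i \<in> {1..n} \<Longrightarrow> z i (ip a b) = ip (Z i a) b + ip a (Z i b)"
  using compat by simp

lemma z_ip_u:
  assumes "i \<in> {1..n}" "j \<in> {1..n}"
  shows "z i (ip y (u j)) = ip (Z i y) (u j) + (\<Sum>k\<in>{1..n}. C i k j * ip y (u k))"
  using Zu assms by (simp add: z_ip ip_sum_right ip_smul_right)

lemma nablaE_add_left: "nab (a + b) h = nab a h + nab b h"
  by (simp add: nablaE_def ip_add_left scale_left_distrib sum.distrib)

lemma nablaE_smul_left: "nab (smul f a) h = smul f (nab a h)"
  by (simp add: nablaE_def ip_smul_left scale_sum_right)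

lemma nablaE_add_right: "nab e (a + b) = nab e a + nab e b"
  unfolding nablaE_def sum.distrib[symmetric]
  by (rule sum.cong) (simp_all add: Z_add scale_right_distrib)

lemma nablaE_smul_right: "nab e (smul f h) = smul f (nab e h) + smul (rho e f) h"
proof -
  have "nab e (smul f h)
      = (\<Sum>i\<in>{1..n}. smul (f * ip e (u i)) (Z i h) + smul (ip e (u i) * z i f) h)"
    unfolding nablaE_def
    by (rule sum.cong) (simp_all add: Z_leibniz scale_right_distrib mult.commute)
  then show ?thesis
    by (simp add: sum.distrib nablaE_def anchorE_def scale_sum_right scale_sum_left)
qed

lemma anchorE_vector_field: "is_vector_field (rho e)"
  unfolding is_vector_field_def anchorE_def
  by (simp add: vector_field_add vector_field_mult vector_field_scaleR z_vector_field
      distrib_left sum.distrib sum_distrib_left sum_distrib_right scaleR_sum_right algebra_simps)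

lemma anchorE_add: "rho (a + b) f = rho a f + rho b f"
  by (simp add: anchorE_def ip_add_left distrib_right sum.distrib)

lemma anchorE_smul: "rho (smul g a) f = g * rho a f"
  by (simp add: anchorE_def ip_smul_left sum_distrib_left mult.assoc)

lemma nablaE_metric: "rho e (ip a b) = ip (nab e a) b + ip a (nab e b)"
  unfolding anchorE_def nablaE_def ip_sum_left ip_sum_right ip_smul_left ip_smul_right
    sum.distrib[symmetric]
  by (rule sum.cong) (simp_all add: z_ip distrib_left)

sublocale metric_connection smul ip nab rho
  using nablaE_add_left nablaE_smul_left nablaE_add_right nablaE_smul_right
    anchorE_vector_field anchorE_add anchorE_smul nablaE_metric
  by unfold_locales

definition Z_sym :: "nat \<Rightarrow> nat \<Rightarrow> 'e \<Rightarrow> 'e" where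
  "Z_sym i j w = Z i (Z j w) + (\<Sum>k\<in>{1..n}. smul (C i j k) (Z k w))"

lemma Z_sym_commute:
  assumes "i \<in> {1..n}" "j \<in> {1..n}"
  shows "Z_sym i j w = Z_sym j i w"
proof -
  have "Z i (Z j w) - Z j (Z i w)
      = (\<Sum>k\<in>{1..n}. smul (C j i k) (Z k w)) - (\<Sum>k\<in>{1..n}. smul (C i j k) (Z k w))"
    using commutator assms by (simp add: scale_left_diff_distrib sum_subtractf)
  then show ?thesis
    unfolding Z_sym_def by (simp add: algebra_simps)
qed

lemma ip_nablaE_u: "ip (nab x y) (u j) = (\<Sum>i\<in>{1..n}. ip x (u i) * ip (Z i y) (u j))"
  by (simp add: nablaE_def ip_sum_left ip_smul_left)

lemma nablaE_z_terms:
  "(\<Sum>i\<in>{1..n}. \<Sum>j\<in>{1..n}. smul (ip x (u i) * z i (ip y (u j))) (Z j w))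
     = nab (nab x y) w
       + (\<Sum>i\<in>{1..n}. \<Sum>j\<in>{1..n}. smul (ip x (u i) * ip y (u j)) (\<Sum>k\<in>{1..n}. smul (C i j k) (Z k w)))"
proof -
  have "(\<Sum>i\<in>{1..n}. \<Sum>j\<in>{1..n}. smul (ip x (u i) * z i (ip y (u j))) (Z j w))
      = (\<Sum>i\<in>{1..n}. \<Sum>j\<in>{1..n}. smul (ip x (u i) * ip (Z i y) (u j)) (Z j w))
        + (\<Sum>i\<in>{1..n}. \<Sum>j\<in>{1..n}. \<Sum>k\<in>{1..n}. smul (ip x (u i) * C i k j * ip y (u k)) (Z j w))"
    by (simp add: z_ip_u distrib_left scale_left_distrib sum.distrib sum_distrib_left
        scale_sum_left mult.assoc del: atLeastAtMost_iff cong: sum.cong)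
  also have "(\<Sum>i\<in>{1..n}. \<Sum>j\<in>{1..n}. smul (ip x (u i) * ip (Z i y) (u j)) (Z j w)) = nab (nab x y) w"
    by (subst sum.swap) (simp add: nablaE_def[of _ _ _ _ _ "nab x y"] ip_nablaE_u scale_sum_left)
  also have "(\<Sum>i\<in>{1..n}. \<Sum>j\<in>{1..n}. \<Sum>k\<in>{1..n}. smul (ip x (u i) * C i k j * ip y (u k)) (Z j w))
      = (\<Sum>i\<in>{1..n}. \<Sum>j\<in>{1..n}. smul (ip x (u i) * ip y (u j)) (\<Sum>k\<in>{1..n}. smul (C i j k) (Z k w)))"
    by (rule sum.cong[OF refl], subst sum.swap) (simp add: scale_sum_right mult_ac)
  finally show ?thesis .
qed

lemma nablaE_nablaE:
  "nab x (nab y w)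
     = nab (nab x y) w + (\<Sum>i\<in>{1..n}. \<Sum>j\<in>{1..n}. smul (ip x (u i) * ip y (u j)) (Z_sym i j w))"
proof -
  have "nab x (nab y w)
      = (\<Sum>i\<in>{1..n}. \<Sum>j\<in>{1..n}. smul (ip x (u i) * ip y (u j)) (Z i (Z j w)))
        + (\<Sum>i\<in>{1..n}. \<Sum>j\<in>{1..n}. smul (ip x (u i) * z i (ip y (u j))) (Z j w))"
    by (simp add: nablaE_def Z_sum Z_leibniz scale_sum_right scale_right_distrib sum.distrib
        del: atLeastAtMost_iff cong: sum.cong)
  then show ?thesis
    unfolding nablaE_z_terms by (simp add: Z_sym_def scale_right_distrib sum.distrib)
qed

lemma nablaE_flat: "curv x y w = 0"
proof -
  have "(\<Sum>i\<in>{1..n}. \<Sum>j\<in>{1..n}. smul (ip x (u i) * ip y (u j)) (Z_sym i j w))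
      = (\<Sum>i\<in>{1..n}. \<Sum>j\<in>{1..n}. smul (ip y (u i) * ip x (u j)) (Z_sym i j w))"
    by (subst sum.swap) (simp add: Z_sym_commute mult.commute del: atLeastAtMost_iff cong: sum.cong)
  then show ?thesis
    by (simp add: curv_def nablaE_nablaE nab_diff_left)
qed

lemma ip_DeltaE: "ip (Del h e) t = ip (nab t e) h"
  unfolding DeltaE_def nablaE_def ip_sum_left ip_smul_left
  by (rule sum.cong) (simp_all add: ip_sym[of "u _"])

lemma ip_DD: "ip (D f) e = rho e f"
  unfolding DD_def anchorE_def ip_sum_left ip_smul_left
  by (rule sum.cong) (simp_all add: ip_sym[of "u _"] mult.commute)

lemma nablaE_eq_zero: "(\<And>i. i \<in> {1..n} \<Longrightarrow> ip x (u i) = 0) \<Longrightarrow> nab x w = 0"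
  unfolding nablaE_def by (simp del: atLeastAtMost_iff)

lemma nablaE_DeltaE: "nab (Del h e) x = 0"
  using isotropic by (intro nablaE_eq_zero) (simp add: DeltaE_def ip_sum_left ip_smul_left)

lemma nablaE_DD: "nab (D f) x = 0"
  using isotropic by (intro nablaE_eq_zero) (simp add: DD_def ip_sum_left ip_smul_left)

lemma faithful_or_anchorE_zero:
  assumes "\<And>w. smul g w = 0"
  shows "g = 0 \<or> (\<forall>e f. rho e f = 0)"
proof (cases "n = 0")
  case True
  then show ?thesis
    by (simp add: anchorE_def)
next
  case False
  let ?c = "\<lambda>i. if i = 1 then g else 0"
  have "(\<Sum>i\<in>{1..n}. smul (?c i) (u i)) = (\<Sum>i\<in>{1..n}. if i = 1 then smul g (u i) else 0)"
    by (rule sum.cong) simp_all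
  also have "\<dots> = 0"
    using False assms by simp
  finally have "\<forall>i\<in>{1..n}. ?c i = 0"
    using indep unfolding lin_indep_family_def by (elim allE[where x = ?c]) simp
  then have "g = 0"
    using False by (metis atLeastAtMost_iff le_refl less_one linorder_not_le)
  then show ?thesis
    by simp
qed

sublocale flat_metric_connection smul ip nab rho Del D
  by unfold_locales
    (fact nablaE_flat ip_DeltaE ip_DD nablaE_DeltaE nablaE_DD faithful_or_anchorE_zero)+

lemma circ_eq_circE: "circ = circE smul ip n u Z"
  by (simp add: fun_eq_iff circ_def circE_def)

end

theorem proposition3p13:
  fixes smul :: "'f::{comm_ring_1,real_algebra_1} \<Rightarrow> 'e::ab_group_add \<Rightarrow> 'e"
    and ip :: "'e \<Rightarrow> 'e \<Rightarrow> 'f"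
    and n :: nat
    and u :: "nat \<Rightarrow> 'e"
    and Z :: "nat \<Rightarrow> 'e \<Rightarrow> 'e"
    and z :: "nat \<Rightarrow> 'f \<Rightarrow> 'f"
    and C :: "nat \<Rightarrow> nat \<Rightarrow> nat \<Rightarrow> 'f"
  assumes module: "module smul"
    and metric: "pseudo_metric smul ip"
    and indep: "lin_indep_family smul n u"
    and cdo: "\<forall>i\<in>{1..n}. cov_diff_op smul (Z i) (z i)"
    and compat: "\<forall>i\<in>{1..n}. \<forall>e1 e2. ip (Z i e1) e2 + ip e1 (Z i e2) = z i (ip e1 e2)"
    and Zu: "\<forall>i\<in>{1..n}. \<forall>j\<in>{1..n}. Z i (u j) = (\<Sum>k\<in>{1..n}. smul (C i k j) (u k))"
    and isotropic: "\<forall>i\<in>{1..n}. \<forall>j\<in>{1..n}. ip (u i) (u j) = 0"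
    and commutator: "\<forall>i\<in>{1..n}. \<forall>j\<in>{1..n}. \<forall>e.
        Z i (Z j e) - Z j (Z i e) = (\<Sum>k\<in>{1..n}. smul (C j i k - C i j k) (Z k e))"
  shows "(\<forall>e1 e2 e3.
            courant_curv (nablaE smul ip n u Z) (circE smul ip n u Z) e1 e2 e3
              = nablaE smul ip n u Z (DeltaE smul ip n u Z e3 e2) e1 \<and>
            nablaE smul ip n u Z (DeltaE smul ip n u Z e3 e2) e1
              = Qop ip (nablaE smul ip n u Z) (circE smul ip n u Z) e1 e2 e3 \<and>
            Qop ip (nablaE smul ip n u Z) (circE smul ip n u Z) e1 e2 e3
              = circE smul ip n u Z (DD smul n u z (ip e1 e3)) e2 \<and>
            circE smul ip n u Z (DD smul n u z (ip e1 e3)) e2 = 0)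
         \<and> courant_algebroid smul ip (circE smul ip n u Z) (anchorE ip n u z)"
proof -
  interpret isotropic_frame smul ip n u Z z C
    by (intro isotropic_frame.intro pseudo_metric_module.intro pseudo_metric_module_axioms.intro
        isotropic_frame_axioms.intro assms)
  show ?thesis
    using courant_curv_eq_zero nablaE_DeltaE Qop_eq_zero circ_D_left courant_algebroid
    by (simp add: circ_eq_circE)
qed

end
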